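(* Let $V$ be a finite nonempty set and $f:\{0,1\}^V\to\{0,1\}^V$. If $f$ has no even-self-dual and no odd-self-dual subnetwork, then $f$ has a unique fixed point $x$, and for every $y\in\{0,1\}^V$ the asynchronous state graph $\Gamma(f)$ contains a directed path from $y$ to $x$ of length $d(x,y)$.
   Context: For $x,y\in\{0,1\}^V$, $x\oplus y$ is componentwise addition mod 2, $1$ is the all-ones point, $e_i$ is the point whose only $1$ is at component $i$, $\|x\|$ is the number of $1$s of $x$, and $d(x,y)=\|x\oplus y\|$ is the Hamming distance; $x$ is even (odd) if $\|x\|$ is even (odd). The conjugate of a network $g$ on $W$ is $\tilde g(x)=g(x)\oplus x$. For nonempty $I\subseteq V$ and $z\in\{0,1\}^{V\setminus I}$, the subnetwork of $f$ induced by $z$ is $h:\{0,1\}^I\to\{0,1\}^I$ with $h(x|_I)=f(x)|_I$ for all $x$ whose restriction to $V\setminus I$ is $z$ ($f$ is a subnetwork of itself). A network $g$ on $W$ is self-dual if $g(x\oplus 1)=g(x)\oplus 1$ for all $x$; even (odd) if $\tilde g(\{0,1\}^W)$ is exactly the set of even (odd) points; even-self-dual (odd-self-dual) if both even (odd) and self-dual. The asynchronous state graph $\Gamma(f)$ is the digraph on vertex set $\{0,1\}^V$ with an arc $x\to x\oplus e_i$ for every $x$ and $i\in V$ such that $f_i(x)\neq x_i$. *)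

theory Defs
  imports Main
begin

text \<open>Points of {0,1}^W are represented by subsets of W (the set of components equal to 1).
  Componentwise xor is symmetric difference; the all-ones point is W itself;
  e_i is {i}; the number of ones is card; Hamming distance is card of the symmetric difference.
  A network on W is a map g with g x \<subseteq> W for all x \<subseteq> W (only its values on Pow W matter).\<close>

definition xor :: "'v set \<Rightarrow> 'v set \<Rightarrow> 'v set" where
  "xor x y = (x - y) \<union> (y - x)"

definition hamming :: "'v set \<Rightarrow> 'v set \<Rightarrow> nat" where
  "hamming x y = card (xor x y)"

definition network :: "'v set \<Rightarrow> ('v set \<Rightarrow> 'v set) \<Rightarrow> bool" where
  "network W g \<longleftrightarrow> (\<forall>x. x \<subseteq> W \<longrightarrow> g x \<subseteq> W)"

definition conjugate :: "('v set \<Rightarrow> 'v set) \<Rightarrow> 'v set \<Rightarrow> 'v set" where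
  "conjugate g x = xor (g x) x"

definition self_dual :: "'v set \<Rightarrow> ('v set \<Rightarrow> 'v set) \<Rightarrow> bool" where
  "self_dual W g \<longleftrightarrow> (\<forall>x. x \<subseteq> W \<longrightarrow> g (xor x W) = xor (g x) W)"

definition even_net :: "'v set \<Rightarrow> ('v set \<Rightarrow> 'v set) \<Rightarrow> bool" where
  "even_net W g \<longleftrightarrow> conjugate g ` Pow W = {x. x \<subseteq> W \<and> even (card x)}"

definition odd_net :: "'v set \<Rightarrow> ('v set \<Rightarrow> 'v set) \<Rightarrow> bool" where
  "odd_net W g \<longleftrightarrow> conjugate g ` Pow W = {x. x \<subseteq> W \<and> odd (card x)}"

definition even_self_dual :: "'v set \<Rightarrow> ('v set \<Rightarrow> 'v set) \<Rightarrow> bool" where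
  "even_self_dual W g \<longleftrightarrow> even_net W g \<and> self_dual W g"

definition odd_self_dual :: "'v set \<Rightarrow> ('v set \<Rightarrow> 'v set) \<Rightarrow> bool" where
  "odd_self_dual W g \<longleftrightarrow> odd_net W g \<and> self_dual W g"

text \<open>Subnetwork of f (on V) on the nonempty component set I \<subseteq> V induced by z \<subseteq> V - I:
  h(x|_I) = f(x)|_I where x agrees with z outside I.\<close>
definition subnet :: "('v set \<Rightarrow> 'v set) \<Rightarrow> 'v set \<Rightarrow> 'v set \<Rightarrow> 'v set \<Rightarrow> 'v set" where
  "subnet f I z = (\<lambda>x. f (x \<union> z) \<inter> I)"

definition has_subnet :: "'v set \<Rightarrow> ('v set \<Rightarrow> 'v set)
    \<Rightarrow> ('v set \<Rightarrow> ('v set \<Rightarrow> 'v set) \<Rightarrow> bool) \<Rightarrow> bool" where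
  "has_subnet V f P \<longleftrightarrow>
     (\<exists>I z. I \<noteq> {} \<and> I \<subseteq> V \<and> z \<subseteq> V - I \<and> P I (subnet f I z))"

definition async_arc :: "'v set \<Rightarrow> ('v set \<Rightarrow> 'v set) \<Rightarrow> 'v set \<Rightarrow> 'v set \<Rightarrow> bool" where
  "async_arc V f x y \<longleftrightarrow> x \<subseteq> V \<and>
     (\<exists>i\<in>V. (i \<in> f x) \<noteq> (i \<in> x) \<and> y = xor x {i})"

definition async_path :: "'v set \<Rightarrow> ('v set \<Rightarrow> 'v set) \<Rightarrow> 'v set \<Rightarrow> 'v set \<Rightarrow> nat \<Rightarrow> bool" where
  "async_path V f y x k \<longleftrightarrow>
     (\<exists>ps. length ps = Suc k \<and> ps ! 0 = y \<and> ps ! k = x \<and>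
        (\<forall>j<k. async_arc V f (ps ! j) (ps ! Suc j)))"

end

theory Submission
  imports Defs
begin

text \<open>The conjugate of every subnetwork of f permutes its cube; this goes by induction on the
  number of components. Suppose the conjugates of all proper subnetworks of a network h on I
  are injective, and write G for the conjugate of h. Restricting to the
  components where two points with the same image differ shows that G identifies only
  complementary points; restricting to I - R, for nonempty R, shows that exactly 2^|R| points
  are mapped into the subcube below R. Inclusion--exclusion then gives fibres of size
  1 + (-1)^|T| (k - 1), where k is the size of the fibre over the zero point. So either k = 1
  and G is a bijection, or every nonempty fibre is a complementary pair and the image consists
  of the even or of the odd points, which makes h even- or odd-self-dual.

  Bijectivity of the conjugate of f gives the unique fixed point x. For y \<noteq> x, injectivity
  of the conjugate of the subnetwork on the components where y and x differ, with the other
  components fixed as in x, yields such a component that is unstable at y; flipping it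
  decreases the distance to x by one.\<close>

lemma mem_xor_iff [simp]: "i \<in> xor a b \<longleftrightarrow> (i \<in> a) \<noteq> (i \<in> b)"
  by (auto simp: xor_def)

lemma xor_eq_empty_iff: "xor a b = {} \<longleftrightarrow> a = b"
  by (auto simp: xor_def)

lemma card_between_split:
  assumes "finite A"
  shows "card {w \<in> A. P \<subseteq> G w \<and> G w \<subseteq> R} =
    card {w \<in> A. insert j P \<subseteq> G w \<and> G w \<subseteq> R} + card {w \<in> A. P \<subseteq> G w \<and> G w \<subseteq> R - {j}}"
proof -
  have "{w \<in> A. P \<subseteq> G w \<and> G w \<subseteq> R} = {w \<in> A. insert j P \<subseteq> G w \<and> G w \<subseteq> R}
      \<union> {w \<in> A. P \<subseteq> G w \<and> G w \<subseteq> R - {j}}" by auto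
  also have "card \<dots> =
      card {w \<in> A. insert j P \<subseteq> G w \<and> G w \<subseteq> R} + card {w \<in> A. P \<subseteq> G w \<and> G w \<subseteq> R - {j}}"
    by (rule card_Un_disjoint) (use \<open>finite A\<close> in auto)
  finally show ?thesis .
qed

text \<open>Inclusion--exclusion over the interval between P and R, carried out by removing one
  element of P at a time so that no signs occur.\<close>
lemma card_between_by_parity:
  fixes G :: "'a \<Rightarrow> 'b set"
  assumes "finite A" "finite I"
    and count: "\<And>R. R \<subseteq> I \<Longrightarrow> R \<noteq> {} \<Longrightarrow> card {w \<in> A. G w \<subseteq> R} = 2 ^ card R"
    and "P \<subseteq> R" "R \<subseteq> I"
  defines "k \<equiv> card {w \<in> A. G w = {}}"
  shows "card {w \<in> A. P \<subseteq> G w \<and> G w \<subseteq> R} =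
    (if P = R then if even (card P) then k else 2 - k else 2 ^ (card R - card P))"
proof -
  have "finite P" using \<open>finite I\<close> \<open>P \<subseteq> R\<close> \<open>R \<subseteq> I\<close> by (meson finite_subset)
  then show ?thesis using \<open>P \<subseteq> R\<close> \<open>R \<subseteq> I\<close>
  proof (induction P arbitrary: R rule: finite_induct)
    case empty
    then show ?case using count[of R] by (cases "R = {}") (simp_all add: k_def)
  next
    case (insert j P)
    have finR: "finite R" using insert.prems \<open>finite I\<close> finite_subset by blast
    have "k \<le> card {w \<in> A. G w \<subseteq> {j}}"
      unfolding k_def using \<open>finite A\<close> by (intro card_mono) auto
    moreover have "j \<in> I" using insert.prems by auto
    ultimately have k2: "k \<le> 2" using count[of "{j}"] by simp
    note card_split = card_between_split[OF \<open>finite A\<close>, of P G R j]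
    have PR: "P \<noteq> R" "P \<subseteq> R" "P \<subseteq> R - {j}" "R - {j} \<subseteq> I" using insert by auto
    have big: "card {w \<in> A. P \<subseteq> G w \<and> G w \<subseteq> R} = 2 ^ (card R - card P)"
      using insert.IH[OF PR(2) insert.prems(2)] PR(1) by simp
    have small: "card {w \<in> A. P \<subseteq> G w \<and> G w \<subseteq> R - {j}} =
        (if P = R - {j} then if even (card P) then k else 2 - k
         else 2 ^ (card (R - {j}) - card P))"
      using insert.IH[OF PR(3,4)] .
    have cards: "card (insert j P) = Suc (card P)" "card (R - {j}) = card R - 1"
      using insert finR by auto
    show ?case
    proof (cases "insert j P = R")
      case True
      then have "P = R - {j}" "card R = Suc (card P)" using insert cards by auto
      then have "card {w \<in> A. insert j P \<subseteq> G w \<and> G w \<subseteq> R}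
          + (if even (card P) then k else 2 - k) = 2"
        using card_split big small by simp
      then show ?thesis using True k2 cards(1) by (cases "even (card P)") auto
    next
      case False
      then have "card (insert j P) < card R"
        using insert.prems finR psubset_card_mono by blast
      then obtain m where m: "card R = card P + 2 + m" using cards
        by (metis add_Suc_right add_2_eq_Suc' less_iff_Suc_add add.commute)
      have "P \<noteq> R - {j}" using False insert by auto
      then have "card {w \<in> A. P \<subseteq> G w \<and> G w \<subseteq> R - {j}} = 2 ^ (m + 1)"
        using small cards m by simp
      moreover have "card {w \<in> A. P \<subseteq> G w \<and> G w \<subseteq> R} = 2 ^ (m + 2)" using big m by simp
      ultimately show ?thesis using card_split False cards m by simp
    qed
  qed
qed

lemma card_fibre_by_parity:
  fixes G :: "'a \<Rightarrow> 'b set"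
  assumes "finite A" "finite I"
    and "\<And>R. R \<subseteq> I \<Longrightarrow> R \<noteq> {} \<Longrightarrow> card {w \<in> A. G w \<subseteq> R} = 2 ^ card R"
    and "T \<subseteq> I"
  shows "card {w \<in> A. G w = T} =
    (if even (card T) then card {w \<in> A. G w = {}} else 2 - card {w \<in> A. G w = {}})"
proof -
  have "{w \<in> A. G w = T} = {w \<in> A. T \<subseteq> G w \<and> G w \<subseteq> T}" by auto
  then show ?thesis using card_between_by_parity[OF assms(1-3), of T T] assms(4) by simp
qed

lemma card_fibre_le_2:
  assumes collision: "\<And>w w'. w \<subseteq> I \<Longrightarrow> w' \<subseteq> I \<Longrightarrow> G w = G w' \<Longrightarrow> w \<noteq> w' \<Longrightarrow> w' = I - w"
  shows "card {w \<in> Pow I. G w = T} \<le> 2"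
proof (cases "\<exists>w \<subseteq> I. G w = T")
  case True
  then obtain w where "w \<subseteq> I" "G w = T" by blast
  then have "{v \<in> Pow I. G v = T} \<subseteq> {w, I - w}" using collision by blast
  then have "card {v \<in> Pow I. G v = T} \<le> card {w, I - w}" by (intro card_mono) auto
  also have "\<dots> \<le> 2" by (simp add: card_insert_if)
  finally show ?thesis .
next
  case False
  then have "{w \<in> Pow I. G w = T} = {}" by auto
  then have "card {w \<in> Pow I. G w = T} = 0" by (simp only: card.empty)
  then show ?thesis by simp
qed

lemma complement_invariant_if_card_fibre_2:
  assumes "finite I"
    and collision: "\<And>w w'. w \<subseteq> I \<Longrightarrow> w' \<subseteq> I \<Longrightarrow> G w = G w' \<Longrightarrow> w \<noteq> w' \<Longrightarrow> w' = I - w"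
    and "w \<subseteq> I" "card {v \<in> Pow I. G v = G w} = 2"
  shows "G (I - w) = G w"
proof -
  have "w \<in> {v \<in> Pow I. G v = G w}" using \<open>w \<subseteq> I\<close> by simp
  then have "card ({v \<in> Pow I. G v = G w} - {w}) = 1"
    using assms(4) \<open>finite I\<close> by (simp add: card_Diff_singleton)
  then obtain w' where "{v \<in> Pow I. G v = G w} - {w} = {w'}" by (rule card_1_singletonE)
  then have "w' \<subseteq> I" "G w' = G w" "w' \<noteq> w" by blast+
  with collision[of w w'] \<open>w \<subseteq> I\<close> show ?thesis by simp
qed

lemma mem_image_Pow_iff_card_fibre:
  assumes "finite I" and maps: "G ` Pow I \<subseteq> Pow I"
  shows "T \<in> G ` Pow I \<longleftrightarrow> T \<subseteq> I \<and> card {w \<in> Pow I. G w = T} \<noteq> 0"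
proof -
  have card0: "card {w \<in> Pow I. G w = T} = 0 \<longleftrightarrow> {w \<in> Pow I. G w = T} = {}"
    using \<open>finite I\<close> by (intro card_0_eq) simp
  show ?thesis
  proof
    assume "T \<in> G ` Pow I"
    then obtain w where w: "w \<in> {w \<in> Pow I. G w = T}" by blast
    then have "T \<subseteq> I" using maps by blast
    moreover have "card {w \<in> Pow I. G w = T} \<noteq> 0" using w card0 by (metis empty_iff)
    ultimately show "T \<subseteq> I \<and> card {w \<in> Pow I. G w = T} \<noteq> 0" ..
  next
    assume "T \<subseteq> I \<and> card {w \<in> Pow I. G w = T} \<noteq> 0"
    then have "{w \<in> Pow I. G w = T} \<noteq> {}" using card0 by simp
    then obtain w where "w \<in> {w \<in> Pow I. G w = T}" by blast
    then show "T \<in> G ` Pow I" by blast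
  qed
qed

lemma injective_or_complement_invariant:
  fixes G :: "'a set \<Rightarrow> 'a set"
  assumes "finite I"
    and maps: "\<And>w. w \<subseteq> I \<Longrightarrow> G w \<subseteq> I"
    and collision: "\<And>w w'. w \<subseteq> I \<Longrightarrow> w' \<subseteq> I \<Longrightarrow> G w = G w' \<Longrightarrow> w \<noteq> w' \<Longrightarrow> w' = I - w"
    and count: "\<And>R. R \<subseteq> I \<Longrightarrow> R \<noteq> {} \<Longrightarrow> card {w \<in> Pow I. G w \<subseteq> R} = 2 ^ card R"
  shows "inj_on G (Pow I) \<or>
    (\<forall>w. w \<subseteq> I \<longrightarrow> G (I - w) = G w) \<and>
      (G ` Pow I = {x. x \<subseteq> I \<and> even (card x)} \<or> G ` Pow I = {x. x \<subseteq> I \<and> odd (card x)})"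
proof -
  define k where "k = card {w \<in> Pow I. G w = {}}"
  have fibre: "card {w \<in> Pow I. G w = T} = (if even (card T) then k else 2 - k)" if "T \<subseteq> I" for T
    unfolding k_def using card_fibre_by_parity[OF _ \<open>finite I\<close> count that] \<open>finite I\<close> by simp
  have "G ` Pow I \<subseteq> Pow I" using maps by blast
  note image = mem_image_Pow_iff_card_fibre[OF \<open>finite I\<close> this]
  have fin: "finite {w \<in> Pow I. G w = T}" for T using \<open>finite I\<close> by simp
  have "k \<le> 2" unfolding k_def by (rule card_fibre_le_2[OF collision])
  then consider "k = 1" | "k = 0 \<or> k = 2" by linarith
  then show ?thesis
  proof cases
    case 1
    have "inj_on G (Pow I)"
    proof (rule inj_onI)
      fix w w' assume w: "w \<in> Pow I" "w' \<in> Pow I" "G w = G w'"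
      have "card {v \<in> Pow I. G v = G w} \<le> Suc 0" using fibre[of "G w"] maps w 1 by auto
      then have "\<forall>v\<in>{v \<in> Pow I. G v = G w}. \<forall>v'\<in>{v \<in> Pow I. G v = G w}. v = v'"
        using card_le_Suc0_iff_eq[OF fin] by blast
      then show "w = w'" using w by auto
    qed
    then show ?thesis by blast
  next
    case 2
    then have fibre2: "card {w \<in> Pow I. G w = T} = (if even (card T) = (k = 2) then 2 else 0)"
      if "T \<subseteq> I" for T
      using fibre[OF that] by auto
    have "G (I - w) = G w" if "w \<subseteq> I" for w
    proof (rule complement_invariant_if_card_fibre_2[OF \<open>finite I\<close> collision that])
      have "w \<in> {v \<in> Pow I. G v = G w}" using that by simp
      then have "card {v \<in> Pow I. G v = G w} \<noteq> 0" using fin[of "G w"] by (metis card_0_eq empty_iff)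
      then show "card {v \<in> Pow I. G v = G w} = 2"
        using fibre2[OF maps[OF that]] by (simp split: if_splits)
    qed
    moreover have "G ` Pow I = {x. x \<subseteq> I \<and> even (card x) = (k = 2)}"
    proof (rule set_eqI)
      fix T
      show "T \<in> G ` Pow I \<longleftrightarrow> T \<in> {x. x \<subseteq> I \<and> even (card x) = (k = 2)}"
      proof (cases "T \<subseteq> I")
        case True
        then show ?thesis unfolding image using fibre2[OF True] by simp
      next
        case False
        then show ?thesis unfolding image by simp
      qed
    qed
    ultimately show ?thesis using 2 by auto
  qed
qed

lemma conjugate_subset_if_network:
  assumes "network W g" "w \<subseteq> W"
  shows "conjugate g w \<subseteq> W"
proof -
  have "g w \<subseteq> W" using assms unfolding network_def by blast
  then show ?thesis using \<open>w \<subseteq> W\<close> by (auto simp: conjugate_def)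
qed

lemma conjugate_subnet_whole:
  assumes "network V f" "x \<subseteq> V"
  shows "conjugate (subnet f V {}) x = conjugate f x"
proof -
  have "f x \<subseteq> V" using assms unfolding network_def by blast
  then show ?thesis by (auto simp: subnet_def conjugate_def)
qed

lemma subnet_subnet:
  assumes "U \<subseteq> I"
  shows "subnet (subnet f I z) U a = subnet f U (z \<union> a)"
  unfolding subnet_def using assms by (intro ext) (auto simp: Un_ac)

lemma conjugate_subnet_subset: "u \<subseteq> U \<Longrightarrow> conjugate (subnet h U a) u \<subseteq> U"
  by (auto simp: conjugate_def subnet_def)

lemma conjugate_subnet_restrict:
  assumes "u \<subseteq> U" "a \<inter> U = {}"
  shows "conjugate (subnet h U a) u = conjugate h (u \<union> a) \<inter> U"
  using assms by (auto simp: conjugate_def subnet_def)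

lemma conjugate_subnet_image_Pow:
  assumes "finite U" "inj_on (conjugate (subnet h U a)) (Pow U)"
  shows "conjugate (subnet h U a) ` Pow U = Pow U"
  using assms by (intro endo_inj_surj) (auto dest: conjugate_subnet_subset)

lemma self_dual_if_conjugate_complement_invariant:
  assumes "\<And>w. w \<subseteq> I \<Longrightarrow> conjugate h (I - w) = conjugate h w"
  shows "self_dual I h"
  unfolding self_dual_def
proof (intro allI impI)
  fix x assume "x \<subseteq> I"
  have "xor x I = I - x" using \<open>x \<subseteq> I\<close> by auto
  moreover have "h (I - x) = xor (conjugate h (I - x)) (I - x)" by (auto simp: conjugate_def)
  ultimately show "h (xor x I) = xor (h x) I"
    using assms \<open>x \<subseteq> I\<close> by (auto simp: conjugate_def)
qed

lemma conjugate_collision_complement: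
  assumes proper: "\<And>U a. U \<subset> I \<Longrightarrow> a \<subseteq> I - U \<Longrightarrow> inj_on (conjugate (subnet h U a)) (Pow U)"
    and "w \<subseteq> I" "w' \<subseteq> I" "conjugate h w = conjugate h w'" "w \<noteq> w'"
  shows "w' = I - w"
proof (rule ccontr)
  assume "w' \<noteq> I - w"
  define D where "D = xor w w'"
  define b where "b = w - D"
  have "D \<subseteq> I" using assms(2,3) by (auto simp: D_def)
  moreover have "D \<noteq> I"
  proof
    assume "D = I"
    then have "\<forall>i. i \<in> I \<longleftrightarrow> (i \<in> w) \<noteq> (i \<in> w')" by (auto simp: D_def)
    then show False using \<open>w' \<noteq> I - w\<close> \<open>w' \<subseteq> I\<close> by blast
  qed
  ultimately have "D \<subset> I" by blast
  have "b \<subseteq> I - D" "b \<inter> D = {}" using assms(2) by (auto simp: b_def)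
  have w: "(w \<inter> D) \<union> b = w" and w': "(w' \<inter> D) \<union> b = w'" by (auto simp: b_def D_def)
  have "conjugate (subnet h D b) (w \<inter> D) = conjugate (subnet h D b) (w' \<inter> D)"
    using conjugate_subnet_restrict[OF _ \<open>b \<inter> D = {}\<close>, of _ h] w w' assms(4) by simp
  then have "w \<inter> D = w' \<inter> D"
    using inj_onD[OF proper[OF \<open>D \<subset> I\<close> \<open>b \<subseteq> I - D\<close>]] by simp
  then have "w = w'" using w w' by metis
  with \<open>w \<noteq> w'\<close> show False ..
qed

lemma card_conjugate_preimage_Pow:
  assumes "finite I" "network I h"
    and proper: "\<And>U a. U \<subset> I \<Longrightarrow> a \<subseteq> I - U \<Longrightarrow> inj_on (conjugate (subnet h U a)) (Pow U)"
    and "R \<subseteq> I" "R \<noteq> {}"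
  shows "card {w \<in> Pow I. conjugate h w \<subseteq> R} = 2 ^ card R"
proof -
  define U where "U = I - R"
  have "U \<subset> I" using assms(4,5) by (auto simp: U_def)
  have maps: "conjugate h w \<subseteq> I" if "w \<subseteq> I" for w
    using conjugate_subset_if_network[OF \<open>network I h\<close> that] .
  have restrict: "conjugate (subnet h U (w \<inter> R)) (w \<inter> U) = conjugate h w \<inter> U" if "w \<subseteq> I" for w
  proof -
    have "(w \<inter> U) \<union> (w \<inter> R) = w" using that \<open>R \<subseteq> I\<close> by (auto simp: U_def)
    then show ?thesis using conjugate_subnet_restrict[of "w \<inter> U" U "w \<inter> R" h] by (auto simp: U_def)
  qed
  have "bij_betw (\<lambda>w. w \<inter> R) {w \<in> Pow I. conjugate h w \<subseteq> R} (Pow R)"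
  proof (rule bij_betw_imageI)
    show "inj_on (\<lambda>w. w \<inter> R) {w \<in> Pow I. conjugate h w \<subseteq> R}"
    proof (rule inj_onI)
      fix w w' assume w: "w \<in> {w \<in> Pow I. conjugate h w \<subseteq> R}" and w': "w' \<in> {w \<in> Pow I. conjugate h w \<subseteq> R}"
        and eq: "w \<inter> R = w' \<inter> R"
      have "w \<inter> R \<subseteq> I - U" using \<open>R \<subseteq> I\<close> by (auto simp: U_def)
      moreover have "conjugate (subnet h U (w \<inter> R)) (w \<inter> U) = conjugate (subnet h U (w \<inter> R)) (w' \<inter> U)"
        using restrict[of w] restrict[of w'] w w' eq by (auto simp: U_def)
      ultimately have "w \<inter> U = w' \<inter> U" using inj_onD[OF proper[OF \<open>U \<subset> I\<close>]] by simp
      then show "w = w'" using eq w w' by (auto simp: U_def)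
    qed
    show "(\<lambda>w. w \<inter> R) ` {w \<in> Pow I. conjugate h w \<subseteq> R} = Pow R"
    proof (intro equalityI subsetI)
      fix a assume "a \<in> Pow R"
      then have "a \<subseteq> I - U" using \<open>R \<subseteq> I\<close> by (auto simp: U_def)
      moreover have "finite U" using \<open>finite I\<close> by (simp add: U_def)
      ultimately obtain u where u: "u \<subseteq> U" "conjugate (subnet h U a) u = {}"
        using conjugate_subnet_image_Pow[OF _ proper[OF \<open>U \<subset> I\<close>]] by (metis Pow_iff empty_subsetI imageE)
      define w where "w = u \<union> a"
      have "w \<subseteq> I" "w \<inter> R = a" "w \<inter> U = u"
        using u(1) \<open>a \<in> Pow R\<close> \<open>R \<subseteq> I\<close> by (auto simp: w_def U_def)
      then have "conjugate h w \<subseteq> R" using restrict[of w] u(2) maps[of w] by (auto simp: U_def)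
      with \<open>w \<subseteq> I\<close> \<open>w \<inter> R = a\<close> show "a \<in> (\<lambda>w. w \<inter> R) ` {w \<in> Pow I. conjugate h w \<subseteq> R}" by blast
    qed auto
  qed
  moreover have "finite R" using \<open>finite I\<close> \<open>R \<subseteq> I\<close> by (rule finite_subset[rotated])
  ultimately show ?thesis by (simp add: bij_betw_same_card card_Pow)
qed

lemma conjugate_inj_or_parity_self_dual:
  assumes "finite I" "network I h"
    and proper: "\<And>U a. U \<subset> I \<Longrightarrow> a \<subseteq> I - U \<Longrightarrow> inj_on (conjugate (subnet h U a)) (Pow U)"
  shows "inj_on (conjugate h) (Pow I) \<or> even_self_dual I h \<or> odd_self_dual I h"
proof -
  have maps: "conjugate h w \<subseteq> I" if "w \<subseteq> I" for w
    using conjugate_subset_if_network[OF \<open>network I h\<close> that] .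
  have sd: "self_dual I h" if "\<forall>w. w \<subseteq> I \<longrightarrow> conjugate h (I - w) = conjugate h w"
    using that by (intro self_dual_if_conjugate_complement_invariant) simp
  have "inj_on (conjugate h) (Pow I) \<or>
      (\<forall>w. w \<subseteq> I \<longrightarrow> conjugate h (I - w) = conjugate h w) \<and> (even_net I h \<or> odd_net I h)"
    using injective_or_complement_invariant[OF \<open>finite I\<close> maps
        conjugate_collision_complement[OF proper] card_conjugate_preimage_Pow[OF assms]]
    unfolding even_net_def odd_net_def .
  then show ?thesis
    unfolding even_self_dual_def odd_self_dual_def using sd by (elim disjE conjE) simp_all
qed

lemma conjugate_subnet_inj:
  assumes "finite V"
    and no_even: "\<not> has_subnet V f even_self_dual" and no_odd: "\<not> has_subnet V f odd_self_dual"
    and "I \<subseteq> V" "z \<subseteq> V - I"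
  shows "inj_on (conjugate (subnet f I z)) (Pow I)"
  using assms(4,5)
proof (induction "card I" arbitrary: I z rule: less_induct)
  case less
  show ?case
  proof (cases "I = {}")
    case True
    then show ?thesis by simp
  next
    case False
    have "finite I" using \<open>finite V\<close> \<open>I \<subseteq> V\<close> by (rule finite_subset[rotated])
    moreover have "network I (subnet f I z)" by (auto simp: network_def subnet_def)
    moreover have "inj_on (conjugate (subnet (subnet f I z) U a)) (Pow U)"
      if "U \<subset> I" "a \<subseteq> I - U" for U a
    proof -
      have "card U < card I" using \<open>finite I\<close> \<open>U \<subset> I\<close> by (rule psubset_card_mono)
      moreover have "U \<subseteq> V" "z \<union> a \<subseteq> V - U" using that less.prems by auto
      ultimately have "inj_on (conjugate (subnet f U (z \<union> a))) (Pow U)" by (rule less.hyps)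
      moreover have "U \<subseteq> I" using \<open>U \<subset> I\<close> by blast
      ultimately show ?thesis by (simp add: subnet_subnet)
    qed
    ultimately have "inj_on (conjugate (subnet f I z)) (Pow I) \<or>
        even_self_dual I (subnet f I z) \<or> odd_self_dual I (subnet f I z)"
      by (rule conjugate_inj_or_parity_self_dual)
    moreover have "\<not> even_self_dual I (subnet f I z)" "\<not> odd_self_dual I (subnet f I z)"
      using no_even no_odd False less.prems unfolding has_subnet_def by blast+
    ultimately show ?thesis by blast
  qed
qed

lemma unique_fixed_point_if_conjugate_inj:
  assumes "finite V" "network V f" "inj_on (conjugate f) (Pow V)"
  shows "\<exists>!x. x \<subseteq> V \<and> f x = x"
proof -
  have fixed_iff: "conjugate f y = {} \<longleftrightarrow> f y = y" for y
    by (simp add: conjugate_def xor_eq_empty_iff)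
  have "conjugate f ` Pow V \<subseteq> Pow V" using conjugate_subset_if_network[OF assms(2)] by blast
  then have "conjugate f ` Pow V = Pow V" using assms(1,3) by (intro endo_inj_surj) simp_all
  then have "{} \<in> conjugate f ` Pow V" by simp
  then obtain x where "{} = conjugate f x" "x \<in> Pow V" by (rule imageE)
  then have x: "x \<subseteq> V" "f x = x" using fixed_iff[of x] by simp_all
  have "x' = x" if "x' \<subseteq> V" "f x' = x'" for x'
    using inj_onD[OF assms(3), of x' x] that x fixed_iff[of x] fixed_iff[of x'] by simp
  with x show ?thesis by blast
qed

lemma exists_unstable_component_towards_fixed_point:
  assumes inj: "\<And>I z. I \<subseteq> V \<Longrightarrow> z \<subseteq> V - I \<Longrightarrow> inj_on (conjugate (subnet f I z)) (Pow I)"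
    and "x \<subseteq> V" "f x = x" "w \<subseteq> V" "w \<noteq> x"
  shows "\<exists>i \<in> xor w x. (i \<in> f w) \<noteq> (i \<in> w)"
proof -
  define D where "D = xor w x"
  define z where "z = x - D"
  have "D \<subseteq> V" "z \<subseteq> V - D" using assms(2,4) by (auto simp: D_def z_def)
  have x: "(x \<inter> D) \<union> z = x" and w: "(w \<inter> D) \<union> z = w" by (auto simp: z_def D_def)
  have cx: "conjugate (subnet f D z) (x \<inter> D) = {}"
    using x \<open>f x = x\<close> by (auto simp: conjugate_def subnet_def)
  have "D \<noteq> {}" using \<open>w \<noteq> x\<close> by (simp add: D_def xor_eq_empty_iff)
  then obtain j where "j \<in> D" by blast
  then have "(j \<in> w \<inter> D) \<noteq> (j \<in> x \<inter> D)" by (simp add: D_def)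
  then have "w \<inter> D \<noteq> x \<inter> D" by blast
  have "conjugate (subnet f D z) (w \<inter> D) \<noteq> {}"
  proof
    assume "conjugate (subnet f D z) (w \<inter> D) = {}"
    then have "w \<inter> D = x \<inter> D"
      using inj_onD[OF inj[OF \<open>D \<subseteq> V\<close> \<open>z \<subseteq> V - D\<close>], of "w \<inter> D" "x \<inter> D"] cx by simp
    with \<open>w \<inter> D \<noteq> x \<inter> D\<close> show False ..
  qed
  then obtain i where "i \<in> conjugate (subnet f D z) (w \<inter> D)" by blast
  then have "i \<in> D" "(i \<in> f w) \<noteq> (i \<in> w)" using w by (auto simp: conjugate_def subnet_def)
  then show ?thesis unfolding D_def by blast
qed

lemma async_path_refl: "async_path V f x x 0"
  unfolding async_path_def by (intro exI[of _ "[x]"]) simp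

lemma async_path_Cons:
  assumes "async_arc V f y y'" "async_path V f y' x n"
  shows "async_path V f y x (Suc n)"
proof -
  obtain ps where ps: "length ps = Suc n" "ps ! 0 = y'" "ps ! n = x"
    "\<forall>j<n. async_arc V f (ps ! j) (ps ! Suc j)"
    using assms(2) unfolding async_path_def by blast
  have "\<forall>j<Suc n. async_arc V f ((y # ps) ! j) ((y # ps) ! Suc j)"
  proof (intro allI impI)
    fix j assume "j < Suc n"
    then show "async_arc V f ((y # ps) ! j) ((y # ps) ! Suc j)"
      using ps assms(1) by (cases j) auto
  qed
  then show ?thesis unfolding async_path_def using ps by (intro exI[of _ "y # ps"]) simp
qed

lemma async_path_geodesic:
  assumes "finite V" "x \<subseteq> V"
    and towards: "\<And>w. w \<subseteq> V \<Longrightarrow> w \<noteq> x \<Longrightarrow> \<exists>i \<in> xor w x. (i \<in> f w) \<noteq> (i \<in> w)"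
    and "y \<subseteq> V"
  shows "async_path V f y x (hamming x y)"
proof -
  have fin: "finite (xor x y)" if "y \<subseteq> V" for y
  proof -
    have "xor x y \<subseteq> V" using \<open>x \<subseteq> V\<close> \<open>y \<subseteq> V\<close> by auto
    then show ?thesis using \<open>finite V\<close> by (rule finite_subset)
  qed
  have "async_path V f y x n" if "hamming x y = n" "y \<subseteq> V" for n
    using that
  proof (induction n arbitrary: y)
    case 0
    then have "y = x" using fin[of y] by (simp add: hamming_def xor_eq_empty_iff)
    then show ?case by (simp add: async_path_refl)
  next
    case (Suc n)
    have "y \<noteq> x" using Suc.prems(1) by (auto simp: hamming_def xor_def)
    then obtain i where i: "i \<in> xor y x" "(i \<in> f y) \<noteq> (i \<in> y)" using towards Suc.prems(2) by blast
    have "i \<in> V" using i(1) Suc.prems(2) \<open>x \<subseteq> V\<close> by auto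
    define y' where "y' = xor y {i}"
    have "async_arc V f y y'"
      unfolding async_arc_def y'_def using Suc.prems(2) \<open>i \<in> V\<close> i(2) by blast
    moreover have "xor x y' = xor x y - {i}" using i(1) by (auto simp: y'_def)
    then have "hamming x y' = n" using Suc.prems fin[of y] i(1) by (simp add: hamming_def)
    moreover have "y' \<subseteq> V" using \<open>i \<in> V\<close> Suc.prems(2) by (auto simp: y'_def)
    ultimately show ?case using Suc.IH async_path_Cons by blast
  qed
  then show ?thesis using \<open>y \<subseteq> V\<close> by blast
qed

theorem corollary4:
  fixes V :: "'v set" and f :: "'v set \<Rightarrow> 'v set"
  assumes "finite V" and "V \<noteq> {}" and "network V f"
    and "\<not> has_subnet V f even_self_dual"
    and "\<not> has_subnet V f odd_self_dual"
  shows "\<exists>x. x \<subseteq> V \<and> f x = x \<and> (\<forall>x'. x' \<subseteq> V \<and> f x' = x' \<longrightarrow> x' = x) \<and>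
           (\<forall>y. y \<subseteq> V \<longrightarrow> async_path V f y x (hamming x y))"
proof -
  have inj: "inj_on (conjugate (subnet f I z)) (Pow I)" if "I \<subseteq> V" "z \<subseteq> V - I" for I z
    using conjugate_subnet_inj[OF assms(1,4,5) that] .
  have "inj_on (conjugate f) (Pow V)"
    using inj[of V "{}"] inj_on_cong[of "Pow V" "conjugate (subnet f V {})" "conjugate f"]
      conjugate_subnet_whole[OF \<open>network V f\<close>] by simp
  from unique_fixed_point_if_conjugate_inj[OF \<open>finite V\<close> \<open>network V f\<close> this]
  obtain x where x: "x \<subseteq> V \<and> f x = x" and unique: "\<forall>x'. x' \<subseteq> V \<and> f x' = x' \<longrightarrow> x' = x"
    by (rule ex1E)
  have "x \<subseteq> V" "f x = x" using x by simp_all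
  have paths: "\<forall>y. y \<subseteq> V \<longrightarrow> async_path V f y x (hamming x y)"
  proof (intro allI impI)
    fix y assume "y \<subseteq> V"
    show "async_path V f y x (hamming x y)"
    proof (rule async_path_geodesic[OF \<open>finite V\<close> \<open>x \<subseteq> V\<close> _ \<open>y \<subseteq> V\<close>])
      show "\<exists>i \<in> xor w x. (i \<in> f w) \<noteq> (i \<in> w)" if "w \<subseteq> V" "w \<noteq> x" for w
        by (rule exists_unstable_component_towards_fixed_point[OF inj \<open>x \<subseteq> V\<close> \<open>f x = x\<close> that])
    qed
  qed
  from x unique paths show ?thesis by blast
qed

end
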